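(* Assume all $q_{ij}$ are roots of unity. Let $\mathbf{b}_1,\ldots,\mathbf{b}_n$ be a $\mathbb{Z}$-basis of the group $S$, and set $z_i=x^{\mathbf{b}_i}\in L$ for $i=1,\ldots,n$. The following are equivalent: (i) after reordering if necessary, $\mathbf{b}_1,\ldots,\mathbf{b}_n$ is a positive diagonal basis of $S$; (ii) the center $Z(L)$ of $L$ is a commutative Laurent series ring over $k$ in $z_1,\ldots,z_n$, i.e. $Z(L)$ consists exactly of the (well-defined) series $\sum_{m\in\mathbb{Z}^n}\mu_m z_1^{m_1}\cdots z_n^{m_n}$ with $\mu_m\in k$ and $\mu_m=0$ whenever $\min\{m_1,\ldots,m_n\}$ is sufficiently negative, and $Z(L)\cong k[[z_1^{\pm1},\ldots,z_n^{\pm1}]]$ via $z_i\mapsto z_i$; (iii) the center $Z(R)$ of $R$ is a commutative power series ring over $k$ in $z_1,\ldots,z_n$, i.e. $Z(R)$ consists exactly of the series $\sum_{m\in\mathbb{N}^n}\mu_m z_1^{m_1}\cdots z_n^{m_n}$, $\mu_m\in k$, and $Z(R)\cong k[[z_1,\ldots,z_n]]$.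
   Context: $k$ is an algebraically closed field, $n$ a positive integer, $q=(q_{ij})$ an $n\times n$ matrix over $k^\times$ with $q_{ii}=1$ and $q_{ij}=q_{ji}^{-1}$. $R=k_q[[x_1,\ldots,x_n]]$ is the $q$-commutative power series ring: the $k$-algebra of formal power series $\sum_{s\in\mathbb{N}^n}c_sx^s$ ($x^s=x_1^{s_1}\cdots x_n^{s_n}$) with multiplication determined by $x_ix_j=q_{ij}x_jx_i$. $L=k_q[[x_1^{\pm1},\ldots,x_n^{\pm1}]]$ is the Ore localization of $R$ at the multiplicative set generated by $x_1,\ldots,x_n$; its elements are series $\sum_{s\in\mathbb{Z}^n}c_sx^s$ with $c_s=0$ when $\min\{s_1,\ldots,s_n\}$ is sufficiently negative, and $x^s=x_1^{s_1}\cdots x_n^{s_n}$ for $s\in\mathbb{Z}^n$. Define $\sigma:\mathbb{Z}^n\times\mathbb{Z}^n\to k^\times$ by $\sigma(s,t)=\prod_{i,j=1}^n q_{ij}^{s_it_j}$ (so $x^sx^t=\sigma(s,t)x^tx^s$), and $S=\{s\in\mathbb{Z}^n:\sigma(s,t)=1\text{ for all }t\in\mathbb{Z}^n\}$, a free abelian subgroup of $\mathbb{Z}^n$ of rank $n$. A $\mathbb{Z}$-basis $\mathbf{b}_1,\ldots,\mathbf{b}_n$ of $S$ is positive diagonal if the $n\times n$ matrix whose $i$th row is $\mathbf{b}_i$ is diagonal with all diagonal entries positive. *)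

theory Defs
  imports "HOL-Computational_Algebra.Polynomial" "HOL-Combinatorics.Permutations"
begin

text \<open>Exponent vectors in Z^n are functions nat => int vanishing outside {..<n}.
  An element of L = k_q[[x_1^{+-1},...,x_n^{+-1}]] is represented by its coefficient
  function f :: (nat => int) => 'k, so that f = sum_s f(s) x^s.\<close>

definition zvec :: "nat \<Rightarrow> (nat \<Rightarrow> int) set" where
  "zvec n = {s. \<forall>i\<ge>n. s i = 0}"

text \<open>sigma(s,t) = prod_{i,j} q_ij^(s_i t_j), so that x^s x^t = sigma(s,t) x^t x^s.\<close>
definition qsigma :: "nat \<Rightarrow> (nat \<Rightarrow> nat \<Rightarrow> 'k::field) \<Rightarrow> (nat \<Rightarrow> int) \<Rightarrow> (nat \<Rightarrow> int) \<Rightarrow> 'k" where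
  "qsigma n q s t = (\<Prod>i<n. \<Prod>j<n. q i j powi (s i * t j))"

text \<open>The reordering scalar: x^s x^t = qeps(s,t) x^(s+t), where
  x^s = x_1^(s_1) ... x_n^(s_n).\<close>
definition qeps :: "nat \<Rightarrow> (nat \<Rightarrow> nat \<Rightarrow> 'k::field) \<Rightarrow> (nat \<Rightarrow> int) \<Rightarrow> (nat \<Rightarrow> int) \<Rightarrow> 'k" where
  "qeps n q s t = (\<Prod>i<n. \<Prod>j<n. if j < i then q i j powi (s i * t j) else 1)"

definition qS :: "nat \<Rightarrow> (nat \<Rightarrow> nat \<Rightarrow> 'k::field) \<Rightarrow> (nat \<Rightarrow> int) set" where
  "qS n q = {s \<in> zvec n. \<forall>t \<in> zvec n. qsigma n q s t = 1}"

definition laurent :: "nat \<Rightarrow> ((nat \<Rightarrow> int) \<Rightarrow> 'k::zero) set" where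
  "laurent n = {f. (\<forall>s. f s \<noteq> 0 \<longrightarrow> s \<in> zvec n) \<and>
                   (\<exists>N::int. \<forall>s. f s \<noteq> 0 \<longrightarrow> (\<forall>i<n. - N \<le> s i))}"

definition pseries :: "nat \<Rightarrow> ((nat \<Rightarrow> int) \<Rightarrow> 'k::zero) set" where
  "pseries n = {f \<in> laurent n. \<forall>s. f s \<noteq> 0 \<longrightarrow> (\<forall>i<n. 0 \<le> s i)}"

text \<open>Multiplication of L (the sum is finite for elements of L).\<close>
definition qmult :: "nat \<Rightarrow> (nat \<Rightarrow> nat \<Rightarrow> 'k::field)
    \<Rightarrow> ((nat \<Rightarrow> int) \<Rightarrow> 'k) \<Rightarrow> ((nat \<Rightarrow> int) \<Rightarrow> 'k) \<Rightarrow> ((nat \<Rightarrow> int) \<Rightarrow> 'k)" where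
  "qmult n q f g = (\<lambda>u. \<Sum>s\<in>{s. f s \<noteq> 0 \<and> g (u - s) \<noteq> 0}. f s * g (u - s) * qeps n q s (u - s))"

definition mono :: "(nat \<Rightarrow> int) \<Rightarrow> ((nat \<Rightarrow> int) \<Rightarrow> 'k::{zero,one})" where
  "mono s = (\<lambda>t. if t = s then 1 else 0)"

definition lone :: "(nat \<Rightarrow> int) \<Rightarrow> 'k::{zero,one}" where
  "lone = mono (\<lambda>_. 0)"

definition qcenter :: "nat \<Rightarrow> (nat \<Rightarrow> nat \<Rightarrow> 'k::field) \<Rightarrow> ((nat \<Rightarrow> int) \<Rightarrow> 'k) set
    \<Rightarrow> ((nat \<Rightarrow> int) \<Rightarrow> 'k) set" where
  "qcenter n q A = {f \<in> A. \<forall>g \<in> A. qmult n q f g = qmult n q g f}"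

definition linv :: "nat \<Rightarrow> (nat \<Rightarrow> nat \<Rightarrow> 'k::field) \<Rightarrow> ((nat \<Rightarrow> int) \<Rightarrow> 'k) \<Rightarrow> ((nat \<Rightarrow> int) \<Rightarrow> 'k)" where
  "linv n q f = (THE g. g \<in> laurent n \<and> qmult n q f g = lone \<and> qmult n q g f = lone)"

primrec npow :: "nat \<Rightarrow> (nat \<Rightarrow> nat \<Rightarrow> 'k::field) \<Rightarrow> ((nat \<Rightarrow> int) \<Rightarrow> 'k) \<Rightarrow> nat \<Rightarrow> ((nat \<Rightarrow> int) \<Rightarrow> 'k)" where
  "npow n q f 0 = lone"
| "npow n q f (Suc k) = qmult n q f (npow n q f k)"

definition ipow :: "nat \<Rightarrow> (nat \<Rightarrow> nat \<Rightarrow> 'k::field) \<Rightarrow> ((nat \<Rightarrow> int) \<Rightarrow> 'k) \<Rightarrow> int \<Rightarrow> ((nat \<Rightarrow> int) \<Rightarrow> 'k)" where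
  "ipow n q f k = (if 0 \<le> k then npow n q f (nat k) else npow n q (linv n q f) (nat (- k)))"

text \<open>zprod n q b m i = z_1^(m_1) ... z_i^(m_i) with z_j = x^(b_(j-1)) (0-based indices).\<close>
primrec zprod :: "nat \<Rightarrow> (nat \<Rightarrow> nat \<Rightarrow> 'k::field) \<Rightarrow> (nat \<Rightarrow> nat \<Rightarrow> int) \<Rightarrow> (nat \<Rightarrow> int) \<Rightarrow> nat
    \<Rightarrow> ((nat \<Rightarrow> int) \<Rightarrow> 'k)" where
  "zprod n q b m 0 = lone"
| "zprod n q b m (Suc i) = qmult n q (zprod n q b m i) (ipow n q (mono (b i)) (m i))"

text \<open>The series sum_m mu_m z^m, computed coefficientwise (each coefficient being a finite sum
  when the series is well defined).\<close>
definition zseries :: "nat \<Rightarrow> (nat \<Rightarrow> nat \<Rightarrow> 'k::field) \<Rightarrow> (nat \<Rightarrow> nat \<Rightarrow> int)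
    \<Rightarrow> ((nat \<Rightarrow> int) \<Rightarrow> 'k) \<Rightarrow> ((nat \<Rightarrow> int) \<Rightarrow> 'k)" where
  "zseries n q b mu = (\<lambda>u. \<Sum>m\<in>{m. mu m \<noteq> 0 \<and> zprod n q b m n u \<noteq> 0}. mu m * zprod n q b m n u)"

definition is_Zbasis :: "nat \<Rightarrow> (nat \<Rightarrow> nat \<Rightarrow> 'k::field) \<Rightarrow> (nat \<Rightarrow> nat \<Rightarrow> int) \<Rightarrow> bool" where
  "is_Zbasis n q b \<longleftrightarrow> (\<forall>i<n. b i \<in> qS n q) \<and>
     (\<forall>s \<in> qS n q. \<exists>!m. m \<in> zvec n \<and> s = (\<lambda>j. \<Sum>i<n. m i * b i j))"

definition pos_diag :: "nat \<Rightarrow> (nat \<Rightarrow> nat \<Rightarrow> int) \<Rightarrow> bool" where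
  "pos_diag n b \<longleftrightarrow> (\<forall>i<n. \<forall>j<n. (i = j \<longrightarrow> b i j > 0) \<and> (i \<noteq> j \<longrightarrow> b i j = 0))"

definition cmult :: "nat \<Rightarrow> ((nat \<Rightarrow> int) \<Rightarrow> 'k::field) \<Rightarrow> ((nat \<Rightarrow> int) \<Rightarrow> 'k) \<Rightarrow> ((nat \<Rightarrow> int) \<Rightarrow> 'k)" where
  "cmult n = qmult n (\<lambda>_ _. 1)"

end

theory Submission
  imports Defs "HOL-Library.Function_Algebras"
begin

text \<open>Every product z^m is a nonzero scalar multiple of the monomial x^(lin m), where
  lin m = \<Sum> m_i b_i runs bijectively over S, and every monomial occurring in a central element
  has its exponent in S. Hence zseries is injective and its values have exactly the right
  support. If the basis is diagonal after reordering, each b_i is d e_a with q_ac^d = 1 for all c,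
  so no reordering scalars ever appear: z^m = x^(lin m), all such series are central, and
  since lin is a positive rescaling of coordinates, the series bounded below (resp. nonnegative)
  in m correspond to those bounded below (resp. nonnegative) in the exponent.

  Conversely, if zseries maps L (resp. R) onto its centre, then the image of \<Sum>_k z_i^k
  (resp. of z_i) lies in L (resp. R), which forces b_i \<ge> 0; and the central monomial
  x^(D e_j), D a common order of the q_ij, must be some z^m with m \<ge> 0. A nonnegative integer
  matrix whose rows span every D e_j with nonnegative coefficients is, after reordering its
  rows, positive diagonal.\<close>

text \<open>Conditions (ii) and (iii) of the theorem, for A = L and A = R respectively.\<close>
definition zseries_center_iso :: "nat \<Rightarrow> (nat \<Rightarrow> nat \<Rightarrow> 'k::field) \<Rightarrow> (nat \<Rightarrow> nat \<Rightarrow> int)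
    \<Rightarrow> ((nat \<Rightarrow> int) \<Rightarrow> 'k) set \<Rightarrow> bool" where
  "zseries_center_iso n q b A \<longleftrightarrow>
     bij_betw (zseries n q b) A (qcenter n q A)
   \<and> (\<forall>\<mu>\<in>A. \<forall>\<nu>\<in>A.
        zseries n q b (\<lambda>s. \<mu> s + \<nu> s) = (\<lambda>u. zseries n q b \<mu> u + zseries n q b \<nu> u)
      \<and> zseries n q b (cmult n \<mu> \<nu>) = qmult n q (zseries n q b \<mu>) (zseries n q b \<nu>))"

abbreviation zvec_supported :: "nat \<Rightarrow> ((nat \<Rightarrow> int) \<Rightarrow> 'k::zero) \<Rightarrow> bool" where
  "zvec_supported n \<mu> \<equiv> \<forall>m. \<mu> m \<noteq> 0 \<longrightarrow> m \<in> zvec n"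

definition cmonom :: "'k::zero \<Rightarrow> (nat \<Rightarrow> int) \<Rightarrow> ((nat \<Rightarrow> int) \<Rightarrow> 'k)" where
  "cmonom c s = (\<lambda>t. if t = s then c else 0)"

definition uvec :: "nat \<Rightarrow> int \<Rightarrow> (nat \<Rightarrow> int)" where
  "uvec i k = (\<lambda>c. if c = i then k else 0)"

definition rowcomb :: "(nat \<Rightarrow> nat \<Rightarrow> int) \<Rightarrow> (nat \<Rightarrow> int) \<Rightarrow> nat \<Rightarrow> (nat \<Rightarrow> int)" where
  "rowcomb b m i = (\<lambda>j. \<Sum>k<i. m k * b k j)"

text \<open>An exponent s is untwisted if x^s meets no reordering scalar with any monomial, on
  either side. For a diagonal basis of S all basis vectors are untwisted; for a general basis
  of S they need not be.\<close>
definition untwisted :: "nat \<Rightarrow> (nat \<Rightarrow> nat \<Rightarrow> 'k::field) \<Rightarrow> (nat \<Rightarrow> int) \<Rightarrow> bool" where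
  "untwisted n q s \<longleftrightarrow> (\<forall>a<n. \<forall>c<n. q a c powi s a = 1 \<and> q c a powi s a = 1)"

section \<open>Exponent vectors and supports\<close>

lemma zvec_diff: "s \<in> zvec n \<Longrightarrow> t \<in> zvec n \<Longrightarrow> s - t \<in> zvec n"
  by (simp add: zvec_def)

lemma zvec_add: "s \<in> zvec n \<Longrightarrow> t \<in> zvec n \<Longrightarrow> s + t \<in> zvec n"
  by (simp add: zvec_def)

lemma zvec_scale: "s \<in> zvec n \<Longrightarrow> (\<lambda>j. k * s j) \<in> zvec n"
  by (simp add: zvec_def)

lemma uvec_in_zvec: "i < n \<Longrightarrow> uvec i k \<in> zvec n"
  by (simp add: uvec_def zvec_def)

lemma rowcomb_0: "rowcomb b m 0 = 0"
  by (simp add: rowcomb_def fun_eq_iff)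

lemma rowcomb_Suc: "rowcomb b m (Suc i) = rowcomb b m i + (\<lambda>j. m i * b i j)"
  by (simp add: rowcomb_def fun_eq_iff)

lemma rowcomb_add: "rowcomb b (m + m') i = rowcomb b m i + rowcomb b m' i"
  by (simp add: rowcomb_def fun_eq_iff distrib_right sum.distrib)

lemma rowcomb_diff: "rowcomb b (m - m') i = rowcomb b m i - rowcomb b m' i"
  by (simp add: rowcomb_def fun_eq_iff left_diff_distrib sum_subtractf)

lemma rowcomb_scale: "rowcomb b (\<lambda>i. k * m i) i = (\<lambda>j. k * rowcomb b m i j)"
  by (simp add: rowcomb_def fun_eq_iff sum_distrib_left mult.assoc)

lemma rowcomb_uvec: "i < n \<Longrightarrow> rowcomb b (uvec i k) n = (\<lambda>j. k * b i j)"
  by (simp add: rowcomb_def uvec_def fun_eq_iff if_distrib[of "\<lambda>x. x * _"] cong: if_cong)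

lemma laurent_zvec_supported: "\<mu> \<in> laurent n \<Longrightarrow> zvec_supported n \<mu>"
  by (simp add: laurent_def)

lemma pseries_subset_laurent: "pseries n \<subseteq> laurent n"
  by (auto simp: pseries_def)

lemma laurent_bounded_below:
  assumes "\<mu> \<in> laurent n"
  obtains N where "0 \<le> N" "\<And>s i. \<mu> s \<noteq> 0 \<Longrightarrow> i < n \<Longrightarrow> - N \<le> s i"
proof -
  obtain N where N: "\<forall>s. \<mu> s \<noteq> 0 \<longrightarrow> (\<forall>i<n. - N \<le> s i)"
    using assms by (auto simp: laurent_def)
  show thesis by (rule that[of "\<bar>N\<bar>"]) (use N in force)+
qed

lemma mono_in_pseries: "t \<in> zvec n \<Longrightarrow> \<forall>i. 0 \<le> t i \<Longrightarrow> mono t \<in> pseries n"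
  by (auto simp: pseries_def laurent_def mono_def intro!: exI[of _ 0])

section \<open>Nonnegative matrices spanning the multiples of the unit vectors\<close>

lemma unit_row_if_nonneg_span:
  fixes b :: "nat \<Rightarrow> nat \<Rightarrow> int"
  assumes nonneg: "\<forall>i<n. \<forall>j<n. 0 \<le> b i j" and nz: "\<forall>i<n. \<exists>j<n. b i j \<noteq> 0"
    and D: "0 < D" and j: "j < n"
    and m: "\<forall>i<n. 0 \<le> m i" "\<forall>c<n. rowcomb b m n c = uvec j D c"
  shows "\<exists>i<n. (\<forall>c<n. c \<noteq> j \<longrightarrow> b i c = 0) \<and> 0 < b i j"
proof -
  have "(\<Sum>i<n. m i * b i j) \<noteq> 0" using m(2) j D by (simp add: rowcomb_def uvec_def)
  then obtain i where i: "i < n" "m i * b i j \<noteq> 0"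
    by (rule sum.not_neutral_contains_not_neutral) blast
  then have mi: "0 < m i" using m(1) by (simp add: order_less_le)
  have zero: "b i c = 0" if c: "c < n" "c \<noteq> j" for c
  proof -
    have "(\<Sum>i<n. m i * b i c) = 0" using m(2) c by (simp add: rowcomb_def uvec_def)
    moreover have "\<forall>i'\<in>{..<n}. 0 \<le> m i' * b i' c" using m(1) nonneg c(1) by auto
    ultimately have "\<forall>i'\<in>{..<n}. m i' * b i' c = 0"
      using sum_nonneg_eq_0_iff[of "{..<n}" "\<lambda>i'. m i' * b i' c"] by simp
    then have "m i * b i c = 0" using i(1) by blast
    then show ?thesis using mi by simp
  qed
  obtain c where "c < n" "b i c \<noteq> 0" using nz i(1) by blast
  then have "b i j \<noteq> 0" using zero by blast
  moreover have "0 \<le> b i j" using nonneg i(1) j by blast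
  ultimately have "0 < b i j" by simp
  then show ?thesis using zero i(1) by blast
qed

lemma pos_diag_if_unit_rows:
  fixes b :: "nat \<Rightarrow> nat \<Rightarrow> int"
  assumes "\<forall>j<n. \<exists>i<n. (\<forall>c<n. c \<noteq> j \<longrightarrow> b i c = 0) \<and> 0 < b i j"
  shows "\<exists>\<pi>. \<pi> permutes {..<n} \<and> pos_diag n (\<lambda>i. b (\<pi> i))"
proof -
  obtain f where f: "\<forall>j\<in>{..<n}. f j < n \<and> (\<forall>c<n. c \<noteq> j \<longrightarrow> b (f j) c = 0) \<and> 0 < b (f j) j"
    using bchoice[of "{..<n}"] assms by (metis lessThan_iff)
  define \<pi> where "\<pi> i = (if i < n then f i else i)" for i
  have inj: "inj_on \<pi> {..<n}"
  proof (rule inj_onI)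
    fix x y assume "x \<in> {..<n}" "y \<in> {..<n}" "\<pi> x = \<pi> y"
    then show "x = y" using f by (metis \<pi>_def lessThan_iff order_less_irrefl)
  qed
  have "\<pi> ` {..<n} = {..<n}"
    using endo_inj_surj[OF _ _ inj] f by (auto simp: \<pi>_def)
  then have "\<pi> permutes {..<n}"
    using inj by (intro bij_imp_permutes) (auto simp: bij_betw_def \<pi>_def)
  moreover have "pos_diag n (\<lambda>i. b (\<pi> i))" using f by (auto simp: pos_diag_def \<pi>_def)
  ultimately show ?thesis by blast
qed

section \<open>Monomials and reordering scalars\<close>

lemma mono_eq_cmonom: "mono s = cmonom 1 s"
  by (simp add: mono_def cmonom_def)

lemma lone_eq_cmonom: "lone = cmonom 1 0"
  by (simp add: lone_def mono_eq_cmonom zero_fun_def)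

lemma qmult_cmonom_left: "qmult n q (cmonom c s) g = (\<lambda>u. c * g (u - s) * qeps n q s (u - s))"
proof
  fix u
  have "{s'. cmonom c s s' \<noteq> 0 \<and> g (u - s') \<noteq> 0} = (if c \<noteq> 0 \<and> g (u - s) \<noteq> 0 then {s} else {})"
    by (auto simp: cmonom_def)
  then show "qmult n q (cmonom c s) g u = c * g (u - s) * qeps n q s (u - s)"
    by (auto simp: qmult_def cmonom_def)
qed

lemma qmult_cmonom_right: "qmult n q f (cmonom c t) = (\<lambda>u. f (u - t) * c * qeps n q (u - t) t)"
proof
  fix u
  have "{s'. f s' \<noteq> 0 \<and> cmonom c t (u - s') \<noteq> 0} = (if c \<noteq> 0 \<and> f (u - t) \<noteq> 0 then {u - t} else {})"
    by (auto simp: cmonom_def)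
  then show "qmult n q f (cmonom c t) u = f (u - t) * c * qeps n q (u - t) t"
    by (auto simp: qmult_def cmonom_def)
qed

lemma qmult_cmonom_cmonom:
  "qmult n q (cmonom c s) (cmonom d t) = cmonom (c * d * qeps n q s t) (s + t)"
  unfolding qmult_cmonom_left by (rule ext) (auto simp: cmonom_def algebra_simps)

lemma qeps_one: "qeps n (\<lambda>_ _. 1::'k::field) s t = 1"
  unfolding qeps_def by (intro prod.neutral ballI) simp

lemma cmult_zvec_supported:
  assumes "zvec_supported n \<mu>" "zvec_supported n \<nu>"
  shows "zvec_supported n (cmult n \<mu> \<nu>)"
proof (intro allI impI)
  fix m assume "cmult n \<mu> \<nu> m \<noteq> 0"
  moreover have "cmult n \<mu> \<nu> m = 0" if "{a. \<mu> a \<noteq> 0 \<and> \<nu> (m - a) \<noteq> 0} = {}"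
    unfolding cmult_def qmult_def that by simp
  ultimately obtain a where "\<mu> a \<noteq> 0" "\<nu> (m - a) \<noteq> 0" by blast
  then have "a + (m - a) \<in> zvec n" using assms by (blast intro: zvec_add)
  then show "m \<in> zvec n" by simp
qed

lemma untwisted_qeps_left: "untwisted n q s \<Longrightarrow> qeps n q s t = 1"
  unfolding qeps_def untwisted_def by (intro prod.neutral ballI) (simp add: power_int_mult)

lemma untwisted_qeps_right: "untwisted n q s \<Longrightarrow> qeps n q t s = 1"
  unfolding qeps_def untwisted_def
  by (intro prod.neutral ballI) (simp add: power_int_mult mult.commute[of "t _"])

lemma untwisted_scale: "untwisted n q s \<Longrightarrow> untwisted n q (\<lambda>j. k * s j)"
  unfolding untwisted_def by (simp add: power_int_mult mult.commute[of k])

lemma untwisted_if_dvd: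
  assumes "\<forall>i<n. \<forall>j<n. q i j ^ D = 1" and "\<forall>a<n. int D dvd s a"
  shows "untwisted n q s"
  unfolding untwisted_def
proof (intro allI impI conjI)
  fix a c assume "a < n" "c < n"
  moreover obtain z where "s a = int D * z" using assms(2) \<open>a < n\<close> by (auto elim: dvdE)
  ultimately show "q a c powi s a = 1" "q c a powi s a = 1"
    using assms(1) by (simp_all add: power_int_mult)
qed

text \<open>With trivial reordering scalars, qmult is the convolution of the coefficient functions.\<close>
lemma qmult_commute_untwisted:
  assumes "\<forall>s. f s \<noteq> 0 \<longrightarrow> untwisted n q s"
  shows "qmult n q f g = qmult n q g f"
proof
  fix u
  have "qmult n q f g u = (\<Sum>s | f s \<noteq> 0 \<and> g (u - s) \<noteq> 0. f s * g (u - s))"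
    unfolding qmult_def using assms by (intro sum.cong refl) (simp add: untwisted_qeps_left)
  also have "\<dots> = (\<Sum>s | g s \<noteq> 0 \<and> f (u - s) \<noteq> 0. g s * f (u - s))"
    by (rule sum.reindex_bij_witness[of _ "\<lambda>s. u - s" "\<lambda>s. u - s"]) (auto simp: mult.commute)
  also have "\<dots> = qmult n q g f u"
    unfolding qmult_def using assms by (intro sum.cong refl) (simp add: untwisted_qeps_right)
  finally show "qmult n q f g u = qmult n q g f u" .
qed

lemma qsigma_scale: "qsigma n q (\<lambda>j. k * s j) t = qsigma n q s (\<lambda>j. k * t j)"
  unfolding qsigma_def by (simp add: algebra_simps)

lemma qsigma_single:
  assumes "a < n" "c < n" "\<forall>i<n. i \<noteq> a \<longrightarrow> s i = 0"
  shows "qsigma n q s (uvec c 1) = q a c powi s a"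
proof -
  have "(\<Prod>j<n. q i j powi (s i * uvec c 1 j)) = (if i = a then q a c powi s a else 1)" if "i < n" for i
  proof (cases "i = a")
    case True
    have "(\<Prod>j<n. q i j powi (s i * uvec c 1 j)) = (\<Prod>j<n. if j = c then q a c powi s a else 1)"
      using True by (intro prod.cong refl) (simp add: uvec_def)
    then show ?thesis using True assms(2) by simp
  qed (use assms(3) that in simp)
  then show ?thesis using assms(1) by (simp add: qsigma_def)
qed

locale qmatrix =
  fixes n :: nat and q :: "nat \<Rightarrow> nat \<Rightarrow> 'k::field"
  assumes q_nz: "\<forall>i<n. \<forall>j<n. q i j \<noteq> 0"
    and q_diag: "\<forall>i<n. q i i = 1"
    and q_inv: "\<forall>i<n. \<forall>j<n. q i j = inverse (q j i)"
begin

lemma qeps_nonzero: "qeps n q s t \<noteq> 0"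
  using q_nz by (simp add: qeps_def prod_zero_iff)

lemma untwisted_add: "untwisted n q s \<Longrightarrow> untwisted n q t \<Longrightarrow> untwisted n q (s + t)"
  using q_nz unfolding untwisted_def by (simp add: power_int_add)

lemma untwisted_rowcomb: "\<forall>k<i. untwisted n q (b k) \<Longrightarrow> untwisted n q (rowcomb b m i)"
proof (induction i)
  case 0
  then show ?case by (simp add: rowcomb_0 untwisted_def)
next
  case (Suc i)
  then show ?case unfolding rowcomb_Suc by (intro untwisted_add untwisted_scale) auto
qed

lemma qsigma_add_left: "qsigma n q (s + s') t = qsigma n q s t * qsigma n q s' t"
  using q_nz unfolding qsigma_def by (simp add: distrib_right power_int_add prod.distrib)

lemma qsigma_add_right: "qsigma n q s (t + t') = qsigma n q s t * qsigma n q s t'"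
  using q_nz unfolding qsigma_def by (simp add: distrib_left power_int_add prod.distrib)

text \<open>The defining relation x^s x^t = \<sigma>(s,t) x^t x^s, read off the reordering scalars.\<close>
lemma qeps_swap: "qeps n q s t = qsigma n q s t * qeps n q t s"
proof -
  define A where "A i j = q i j powi (s i * t j)" for i j
  have split: "A i j = (if j < i then A i j else 1) * (if i < j then A i j else 1)" if "i < n" for i j
    using q_diag that by (cases "i = j") (auto simp: A_def)
  have "qsigma n q s t = (\<Prod>i<n. \<Prod>j<n. (if j < i then A i j else 1) * (if i < j then A i j else 1))"
    unfolding qsigma_def A_def[symmetric] by (intro prod.cong refl) (rule split; simp)
  also have "\<dots> = qeps n q s t * (\<Prod>i<n. \<Prod>j<n. if i < j then A i j else 1)"
    unfolding prod.distrib qeps_def A_def ..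
  also have "(\<Prod>i<n. \<Prod>j<n. if i < j then A i j else 1)
      = (\<Prod>i<n. \<Prod>j<n. inverse (if i < j then q j i powi (t j * s i) else 1))"
  proof (intro prod.cong refl)
    fix i j assume "i \<in> {..<n}" "j \<in> {..<n}"
    then have "q i j = inverse (q j i)" using q_inv by blast
    then show "(if i < j then A i j else 1) = inverse (if i < j then q j i powi (t j * s i) else 1)"
      by (simp add: A_def power_int_inverse mult.commute)
  qed
  also have "\<dots> = (\<Prod>j<n. \<Prod>i<n. inverse (if i < j then q j i powi (t j * s i) else 1))"
    by (rule prod.swap)
  also have "\<dots> = inverse (qeps n q t s)"
    unfolding qeps_def prod_inversef[symmetric, unfolded comp_def] ..
  finally show ?thesis using qeps_nonzero[of t s] by simp
qed

lemma qsigma_eq_1_if_nonneg: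
  assumes nonneg: "\<And>t. t \<in> zvec n \<Longrightarrow> \<forall>i. 0 \<le> t i \<Longrightarrow> qsigma n q s t = 1" and t: "t \<in> zvec n"
  shows "qsigma n q s t = 1"
proof -
  define tp where "tp = (\<lambda>j. max (t j) 0)"
  define tn where "tn = (\<lambda>j. max (- t j) 0)"
  have "tp = t + tn" by (auto simp: tp_def tn_def fun_eq_iff)
  moreover have "tp \<in> zvec n" "tn \<in> zvec n" using t by (auto simp: zvec_def tp_def tn_def)
  then have "qsigma n q s tp = 1" "qsigma n q s tn = 1" using nonneg by (auto simp: tp_def tn_def)
  ultimately show ?thesis using qsigma_add_right[of s t tn] by simp
qed

text \<open>Comparing the coefficients of x^(s+t) in f x^t and x^t f for central f gives
  \<sigma>(s,t) = 1 whenever x^s occurs in f.\<close>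
lemma qcenter_support_in_qS:
  assumes A: "A \<subseteq> laurent n" and monoms: "\<And>t. t \<in> zvec n \<Longrightarrow> \<forall>i. 0 \<le> t i \<Longrightarrow> mono t \<in> A"
    and f: "f \<in> qcenter n q A" and s: "f s \<noteq> 0"
  shows "s \<in> qS n q"
proof -
  have "s \<in> zvec n" using f A s by (auto simp: qcenter_def laurent_def)
  moreover have "qsigma n q s t = 1" if "t \<in> zvec n" for t
  proof (rule qsigma_eq_1_if_nonneg[OF _ that])
    fix t assume "t \<in> zvec n" "\<forall>i. 0 \<le> t i"
    then have "qmult n q f (mono t) (s + t) = qmult n q (mono t) f (s + t)"
      using f monoms by (auto simp: qcenter_def)
    then have "qeps n q s t = 1 * qeps n q t s"
      using s by (simp add: mono_eq_cmonom qmult_cmonom_left qmult_cmonom_right)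
    then show "qsigma n q s t = 1"
      using qeps_swap[of s t] qeps_nonzero[of t s] by (metis mult_right_cancel)
  qed
  ultimately show ?thesis by (simp add: qS_def)
qed

lemma linv_mono:
  assumes s: "s \<in> zvec n"
  shows "linv n q (mono s) = cmonom (inverse (qeps n q s (- s))) (- s)"
  unfolding linv_def
proof (rule the_equality)
  let ?g = "cmonom (inverse (qeps n q s (- s))) (- s) :: (nat \<Rightarrow> int) \<Rightarrow> 'k"
  have "(- s i) * s j = s i * (- s j)" for i j by simp
  then have sym: "qeps n q (- s) s = qeps n q s (- s)"
    by (simp only: qeps_def uminus_apply)
  have "?g \<in> laurent n"
    unfolding laurent_def
  proof (intro CollectI conjI allI impI exI)
    fix x i assume "?g x \<noteq> 0"
    then have "x = - s" by (auto simp: cmonom_def split: if_splits)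
    then show "x \<in> zvec n" using s by (simp add: zvec_def)
    assume "i < n"
    then have "\<bar>s i\<bar> \<le> (\<Sum>i<n. \<bar>s i\<bar>)" by (intro member_le_sum) auto
    with \<open>x = - s\<close> show "- (\<Sum>i<n. \<bar>s i\<bar>) \<le> x i" by auto
  qed
  then show "?g \<in> laurent n \<and> qmult n q (mono s) ?g = lone \<and> qmult n q ?g (mono s) = lone"
    using qeps_nonzero sym by (simp add: mono_eq_cmonom qmult_cmonom_cmonom lone_eq_cmonom)
next
  fix g :: "(nat \<Rightarrow> int) \<Rightarrow> 'k"
  assume "g \<in> laurent n \<and> qmult n q (mono s) g = lone \<and> qmult n q g (mono s) = lone"
  then have "(\<lambda>u. 1 * g (u - s) * qeps n q s (u - s)) = lone"
    by (simp only: mono_eq_cmonom qmult_cmonom_left)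
  from fun_cong[OF this] have h: "g v * qeps n q s v = lone (v + s)" for v
    by (metis add_diff_cancel_right' mult_1)
  show "g = cmonom (inverse (qeps n q s (- s))) (- s)"
  proof
    fix v
    have "v + s = 0 \<longleftrightarrow> v = - s" by (metis add.commute add_eq_0_iff2)
    then show "g v = cmonom (inverse (qeps n q s (- s))) (- s) v"
      using h[of v] qeps_nonzero[of s v]
      by (auto simp: lone_eq_cmonom cmonom_def field_simps split: if_splits)
  qed
qed

lemma npow_cmonom:
  "\<exists>c. npow n q (cmonom a s) k = cmonom c (\<lambda>j. int k * s j)
     \<and> (a \<noteq> 0 \<longrightarrow> c \<noteq> 0) \<and> (a = 1 \<and> untwisted n q s \<longrightarrow> c = 1)"
proof (induction k)
  case 0
  then show ?case by (auto simp: lone_eq_cmonom zero_fun_def)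
next
  case (Suc k)
  then obtain c where c: "npow n q (cmonom a s) k = cmonom c (\<lambda>j. int k * s j)"
    "a \<noteq> 0 \<longrightarrow> c \<noteq> 0" "a = 1 \<and> untwisted n q s \<longrightarrow> c = 1" by blast
  have "s + (\<lambda>j. int k * s j) = (\<lambda>j. int (Suc k) * s j)" by (auto simp: algebra_simps)
  then show ?case
    using c qeps_nonzero[of s "\<lambda>j. int k * s j"] untwisted_qeps_left[of n q s]
    by (intro exI[of _ "a * c * qeps n q s (\<lambda>j. int k * s j)"]) (simp add: qmult_cmonom_cmonom)
qed

lemma ipow_mono:
  assumes s: "s \<in> zvec n"
  shows "\<exists>c. ipow n q (mono s) k = cmonom c (\<lambda>j. k * s j) \<and> c \<noteq> 0 \<and> (untwisted n q s \<longrightarrow> c = 1)"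
proof (cases "0 \<le> k")
  case True
  then show ?thesis using npow_cmonom[of 1 s "nat k"] by (simp add: ipow_def mono_eq_cmonom)
next
  case False
  let ?a = "inverse (qeps n q s (- s))"
  have "untwisted n q s \<Longrightarrow> untwisted n q (- s) \<and> ?a = 1"
    using untwisted_scale[of n q s "-1"] untwisted_qeps_left[of n q s] by (simp add: fun_Compl_def)
  moreover have "(\<lambda>j. int (nat (-k)) * (-s) j) = (\<lambda>j. k * s j)" using False by auto
  ultimately show ?thesis
    using False npow_cmonom[of ?a "- s" "nat (- k)"] qeps_nonzero[of s "- s"]
    unfolding ipow_def linv_mono[OF s] by auto
qed

lemma zprod_cmonom:
  assumes "\<forall>k<i. b k \<in> zvec n"
  shows "\<exists>c. zprod n q b m i = cmonom c (rowcomb b m i) \<and> c \<noteq> 0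
     \<and> ((\<forall>k<i. untwisted n q (b k)) \<longrightarrow> c = 1)"
  using assms
proof (induction i)
  case 0
  then show ?case by (auto simp: lone_eq_cmonom rowcomb_0 zero_fun_def)
next
  case (Suc i)
  then obtain c where c: "zprod n q b m i = cmonom c (rowcomb b m i)" "c \<noteq> 0"
    "(\<forall>k<i. untwisted n q (b k)) \<longrightarrow> c = 1" by auto
  obtain c' where c': "ipow n q (mono (b i)) (m i) = cmonom c' (\<lambda>j. m i * b i j)" "c' \<noteq> 0"
    "untwisted n q (b i) \<longrightarrow> c' = 1"
    using ipow_mono[of "b i" "m i"] Suc.prems by auto
  define e where "e = qeps n q (rowcomb b m i) (\<lambda>j. m i * b i j)"
  have "zprod n q b m (Suc i) = cmonom (c * c' * e) (rowcomb b m (Suc i))"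
    using c c' by (simp add: qmult_cmonom_cmonom rowcomb_Suc e_def)
  moreover have "e \<noteq> 0" unfolding e_def by (rule qeps_nonzero)
  moreover have "c * c' * e = 1" if "\<forall>k<Suc i. untwisted n q (b k)"
    using that c c' untwisted_rowcomb[of i b m] by (simp add: e_def untwisted_qeps_left)
  ultimately show ?case using c c' by auto
qed

end

section \<open>The map zseries for an arbitrary basis of S\<close>

locale qbasis = qmatrix n q for n and q :: "nat \<Rightarrow> nat \<Rightarrow> 'k::field" +
  fixes b :: "nat \<Rightarrow> nat \<Rightarrow> int"
  assumes basis: "is_Zbasis n q b"
begin

abbreviation lin :: "(nat \<Rightarrow> int) \<Rightarrow> (nat \<Rightarrow> int)" where
  "lin m \<equiv> rowcomb b m n"

lemma b_in_qS: "i < n \<Longrightarrow> b i \<in> qS n q"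
  using basis by (auto simp: is_Zbasis_def)

lemma b_in_zvec: "i < n \<Longrightarrow> b i \<in> zvec n"
  using b_in_qS by (simp add: qS_def)

lemma lin_in_zvec: "lin m \<in> zvec n"
  using b_in_zvec by (auto simp: zvec_def rowcomb_def)

lemma rowcomb_in_qS: "i \<le> n \<Longrightarrow> rowcomb b m i \<in> qS n q"
proof (induction i)
  case 0
  then show ?case by (simp add: rowcomb_def qS_def zvec_def qsigma_def)
next
  case (Suc i)
  then have IH: "rowcomb b m i \<in> qS n q" and bi: "b i \<in> qS n q" using b_in_qS by auto
  have "rowcomb b m (Suc i) \<in> zvec n"
    using IH bi unfolding rowcomb_Suc qS_def by (blast intro: zvec_add zvec_scale)
  moreover have "qsigma n q (rowcomb b m (Suc i)) t = 1" if t: "t \<in> zvec n" for t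
    using IH bi zvec_scale[OF t, of "m i"]
    unfolding rowcomb_Suc qsigma_add_left qsigma_scale by (simp add: qS_def t)
  ultimately show ?case by (simp add: qS_def)
qed

lemma inj_on_lin: "inj_on lin (zvec n)"
proof (rule inj_onI)
  fix m m' assume "m \<in> zvec n" "m' \<in> zvec n" "lin m = lin m'"
  moreover have "\<exists>!x. x \<in> zvec n \<and> lin m = (\<lambda>j. \<Sum>i<n. x i * b i j)"
    using basis rowcomb_in_qS[of n m] by (auto simp: is_Zbasis_def)
  ultimately show "m = m'" unfolding rowcomb_def by blast
qed

lemma qS_subset_lin_image: "s \<in> qS n q \<Longrightarrow> \<exists>m\<in>zvec n. s = lin m"
  using basis unfolding is_Zbasis_def rowcomb_def by blast

lemma b_row_nonzero:
  assumes i: "i < n" shows "\<exists>j<n. b i j \<noteq> 0"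
proof (rule ccontr)
  assume "\<not> ?thesis"
  then have "b i = 0" using b_in_zvec[OF i] by (auto simp: zvec_def fun_eq_iff not_less)
  then have "lin (uvec i 1) = lin 0" unfolding rowcomb_uvec[OF i] by (simp add: rowcomb_def zero_fun_def)
  then have "uvec i 1 = 0"
    using inj_on_lin uvec_in_zvec[OF i] by (auto simp: zvec_def dest: inj_onD)
  then show False by (metis uvec_def zero_fun_def zero_neq_one)
qed

definition zcoeff :: "(nat \<Rightarrow> int) \<Rightarrow> 'k" where
  "zcoeff m = zprod n q b m n (lin m)"

lemma zprod_eq_cmonom: "zprod n q b m n = cmonom (zcoeff m) (lin m)"
  and zcoeff_nonzero: "zcoeff m \<noteq> 0"
  and zcoeff_eq_1_if_untwisted: "\<forall>k<n. untwisted n q (b k) \<Longrightarrow> zcoeff m = 1"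
proof -
  obtain c where c: "zprod n q b m n = cmonom c (lin m)" "c \<noteq> 0"
    "(\<forall>k<n. untwisted n q (b k)) \<longrightarrow> c = 1"
    using zprod_cmonom[of n b m] b_in_zvec by auto
  moreover have "zcoeff m = c" using c by (simp add: zcoeff_def cmonom_def)
  ultimately show "zprod n q b m n = cmonom (zcoeff m) (lin m)" "zcoeff m \<noteq> 0"
    "\<forall>k<n. untwisted n q (b k) \<Longrightarrow> zcoeff m = 1" by auto
qed

lemma zseries_at_lin:
  assumes "zvec_supported n \<mu>" and m: "m \<in> zvec n"
  shows "zseries n q b \<mu> (lin m) = \<mu> m * zcoeff m"
proof -
  have "{m'. \<mu> m' \<noteq> 0 \<and> zprod n q b m' n (lin m) \<noteq> 0} = (if \<mu> m \<noteq> 0 then {m} else {})"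
    using assms inj_on_lin zcoeff_nonzero
    by (auto simp: zprod_eq_cmonom cmonom_def dest: inj_onD)
  then show ?thesis by (simp add: zseries_def zprod_eq_cmonom cmonom_def)
qed

lemma zseries_outside_lin:
  assumes "zvec_supported n \<mu>" and "\<forall>m\<in>zvec n. lin m \<noteq> u"
  shows "zseries n q b \<mu> u = 0"
proof -
  have empty: "{m. \<mu> m \<noteq> 0 \<and> zprod n q b m n u \<noteq> 0} = {}"
    using assms by (auto simp: zprod_eq_cmonom cmonom_def)
  show ?thesis unfolding zseries_def empty by simp
qed

lemma zseries_nonzero_imp:
  assumes "zvec_supported n \<mu>" and "zseries n q b \<mu> u \<noteq> 0"
  shows "\<exists>m\<in>zvec n. u = lin m \<and> \<mu> m \<noteq> 0"
  using zseries_outside_lin[OF assms(1)] zseries_at_lin[OF assms(1)] assms(2) by force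

section \<open>Bases for which zseries is onto the centre\<close>

lemma b_nonneg_if_zseries_laurent:
  assumes closed: "\<And>\<mu>. \<mu> \<in> laurent n \<Longrightarrow> zseries n q b \<mu> \<in> laurent n" and i: "i < n" and j: "j < n"
  shows "0 \<le> b i j"
proof (rule ccontr)
  assume neg: "\<not> 0 \<le> b i j"
  define \<mu> :: "(nat \<Rightarrow> int) \<Rightarrow> 'k" where "\<mu> = (\<lambda>m. if \<exists>k\<ge>0. m = uvec i k then 1 else 0)"
  have supp: "zvec_supported n \<mu>" using uvec_in_zvec[OF i] by (auto simp: \<mu>_def)
  then have "\<mu> \<in> laurent n" by (auto simp: laurent_def \<mu>_def uvec_def intro!: exI[of _ 0])
  then obtain N where N: "0 \<le> N" "\<And>s c. zseries n q b \<mu> s \<noteq> 0 \<Longrightarrow> c < n \<Longrightarrow> - N \<le> s c"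
    using laurent_bounded_below[OF closed] by blast
  have "\<exists>k\<ge>0. uvec i (N + 1) = uvec i k" using N(1) by (intro exI[of _ "N + 1"]) simp
  then have "\<mu> (uvec i (N + 1)) = 1" by (simp add: \<mu>_def)
  then have "zseries n q b \<mu> (lin (uvec i (N + 1))) \<noteq> 0"
    using zseries_at_lin[OF supp uvec_in_zvec[OF i]] zcoeff_nonzero by simp
  then have "- N \<le> (N + 1) * b i j" using N(2) j by (simp add: rowcomb_uvec[OF i])
  moreover have "(N + 1) * b i j \<le> - (N + 1)"
    using neg N(1) mult_left_mono[of "b i j" "- 1" "N + 1"] by simp
  ultimately show False by linarith
qed

lemma b_nonneg_if_zseries_pseries:
  assumes closed: "\<And>\<mu>. \<mu> \<in> pseries n \<Longrightarrow> zseries n q b \<mu> \<in> pseries n" and i: "i < n" and j: "j < n"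
  shows "0 \<le> b i j"
proof -
  let ?\<mu> = "mono (uvec i 1) :: (nat \<Rightarrow> int) \<Rightarrow> 'k"
  have "?\<mu> \<in> pseries n" by (rule mono_in_pseries[OF uvec_in_zvec[OF i]]) (simp add: uvec_def)
  moreover have "zseries n q b ?\<mu> (lin (uvec i 1)) \<noteq> 0"
    using zseries_at_lin[of ?\<mu>, OF _ uvec_in_zvec[OF i]] uvec_in_zvec[OF i] zcoeff_nonzero
    by (simp add: mono_def)
  ultimately have "0 \<le> lin (uvec i 1) j" using closed j by (auto simp: pseries_def)
  then show ?thesis by (simp add: rowcomb_uvec[OF i])
qed

text \<open>The central series \<Sum>_k x^(k D e_j) has a preimage \<mu>; its term z^m for x^(D e_j) comes
  with all the terms z^(k m), and \<mu> being bounded below forces m \<ge> 0.\<close>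
lemma unit_multiple_in_nonneg_span_laurent:
  assumes onto: "qcenter n q (laurent n) \<subseteq> zseries n q b ` laurent n" and j: "j < n"
    and D: "\<forall>i<n. \<forall>j<n. q i j ^ D = 1"
  shows "\<exists>m\<in>zvec n. (\<forall>i<n. 0 \<le> m i) \<and> lin m = uvec j (int D)"
proof -
  define f :: "(nat \<Rightarrow> int) \<Rightarrow> 'k" where "f = (\<lambda>u. if \<exists>k\<ge>0. u = uvec j (k * int D) then 1 else 0)"
  have "f \<in> laurent n"
    using uvec_in_zvec[OF j] by (auto simp: laurent_def f_def uvec_def intro!: exI[of _ 0])
  moreover have "\<forall>s. f s \<noteq> 0 \<longrightarrow> untwisted n q s"
  proof (intro allI impI)
    fix s assume "f s \<noteq> 0"
    then obtain k where "s = uvec j (k * int D)" by (auto simp: f_def split: if_splits)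
    then show "untwisted n q s" by (intro untwisted_if_dvd[OF D]) (simp add: uvec_def)
  qed
  ultimately have "f \<in> qcenter n q (laurent n)" using qmult_commute_untwisted by (auto simp: qcenter_def)
  then obtain \<mu> where \<mu>: "\<mu> \<in> laurent n" "zseries n q b \<mu> = f" using onto by blast
  have supp: "zvec_supported n \<mu>" using \<mu>(1) by (rule laurent_zvec_supported)
  have f_multiple: "f (uvec j (k * int D)) = 1" if "0 \<le> k" for k
    unfolding f_def using that by auto
  obtain m where m: "m \<in> zvec n" "lin m = uvec j (int D)"
    using zseries_nonzero_imp[OF supp, of "uvec j (int D)"] \<mu>(2) f_multiple[of 1] by auto
  obtain N where N: "0 \<le> N" "\<And>s i. \<mu> s \<noteq> 0 \<Longrightarrow> i < n \<Longrightarrow> - N \<le> s i"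
    using laurent_bounded_below[OF \<mu>(1)] by blast
  have "0 \<le> m i" if i: "i < n" for i
  proof (rule ccontr)
    assume neg: "\<not> 0 \<le> m i"
    have "lin (\<lambda>i. (N + 1) * m i) = uvec j ((N + 1) * int D)"
      using m(2) by (simp add: rowcomb_scale uvec_def fun_eq_iff)
    then have "zseries n q b \<mu> (lin (\<lambda>i. (N + 1) * m i)) = 1" using \<mu>(2) f_multiple N(1) by simp
    then have "\<mu> (\<lambda>i. (N + 1) * m i) \<noteq> 0" using zseries_at_lin[OF supp zvec_scale[OF m(1)]] by auto
    then have "- N \<le> (N + 1) * m i" using N(2) i by blast
    moreover have "(N + 1) * m i \<le> - (N + 1)"
      using neg N(1) mult_left_mono[of "m i" "- 1" "N + 1"] by simp
    ultimately show False by linarith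
  qed
  then show ?thesis using m by blast
qed

lemma unit_multiple_in_nonneg_span_pseries:
  assumes onto: "qcenter n q (pseries n) \<subseteq> zseries n q b ` pseries n" and j: "j < n"
    and D: "\<forall>i<n. \<forall>j<n. q i j ^ D = 1"
  shows "\<exists>m\<in>zvec n. (\<forall>i<n. 0 \<le> m i) \<and> lin m = uvec j (int D)"
proof -
  define f :: "(nat \<Rightarrow> int) \<Rightarrow> 'k" where "f = mono (uvec j (int D))"
  have "f \<in> pseries n" unfolding f_def by (rule mono_in_pseries[OF uvec_in_zvec[OF j]]) (simp add: uvec_def)
  moreover have "\<forall>s. f s \<noteq> 0 \<longrightarrow> untwisted n q s"
    using untwisted_if_dvd[OF D] by (auto simp: f_def mono_def uvec_def)
  ultimately have "f \<in> qcenter n q (pseries n)" using qmult_commute_untwisted by (auto simp: qcenter_def)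
  then obtain \<mu> where \<mu>: "\<mu> \<in> pseries n" "zseries n q b \<mu> = f" using onto by blast
  then have "zvec_supported n \<mu>" using pseries_subset_laurent laurent_zvec_supported by blast
  moreover have "zseries n q b \<mu> (uvec j (int D)) \<noteq> 0" using \<mu>(2) by (simp add: f_def mono_def)
  ultimately obtain m where "m \<in> zvec n" "uvec j (int D) = lin m" "\<mu> m \<noteq> 0"
    using zseries_nonzero_imp by blast
  then show ?thesis using \<mu>(1) by (auto simp: pseries_def)
qed

lemma pos_diag_if_nonneg_span:
  assumes nonneg: "\<forall>i<n. \<forall>j<n. 0 \<le> b i j" and D: "0 < D"
    and span: "\<forall>j<n. \<exists>m\<in>zvec n. (\<forall>i<n. 0 \<le> m i) \<and> lin m = uvec j (int D)"
  shows "\<exists>\<pi>. \<pi> permutes {..<n} \<and> pos_diag n (\<lambda>i. b (\<pi> i))"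
proof (rule pos_diag_if_unit_rows, intro allI impI)
  fix j assume j: "j < n"
  then obtain m where "\<forall>i<n. 0 \<le> m i" "lin m = uvec j (int D)" using span by blast
  then show "\<exists>i<n. (\<forall>c<n. c \<noteq> j \<longrightarrow> b i c = 0) \<and> 0 < b i j"
    using unit_row_if_nonneg_span[OF nonneg _ _ j, of "int D" m] b_row_nonzero D by auto
qed

lemma pos_diag_if_zseries_center_iso_laurent:
  assumes "0 < D" "\<forall>i<n. \<forall>j<n. q i j ^ D = 1" and "zseries_center_iso n q b (laurent n)"
  shows "\<exists>\<pi>. \<pi> permutes {..<n} \<and> pos_diag n (\<lambda>i. b (\<pi> i))"
proof -
  have onto: "zseries n q b ` laurent n = qcenter n q (laurent n)"
    using assms(3) by (simp add: zseries_center_iso_def bij_betw_def)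
  then have "\<mu> \<in> laurent n \<Longrightarrow> zseries n q b \<mu> \<in> laurent n" for \<mu>
    unfolding qcenter_def by blast
  then show ?thesis
    using pos_diag_if_nonneg_span[OF _ assms(1)] b_nonneg_if_zseries_laurent
      unit_multiple_in_nonneg_span_laurent[OF _ _ assms(2)] onto by blast
qed

lemma pos_diag_if_zseries_center_iso_pseries:
  assumes "0 < D" "\<forall>i<n. \<forall>j<n. q i j ^ D = 1" and "zseries_center_iso n q b (pseries n)"
  shows "\<exists>\<pi>. \<pi> permutes {..<n} \<and> pos_diag n (\<lambda>i. b (\<pi> i))"
proof -
  have onto: "zseries n q b ` pseries n = qcenter n q (pseries n)"
    using assms(3) by (simp add: zseries_center_iso_def bij_betw_def)
  then have "\<mu> \<in> pseries n \<Longrightarrow> zseries n q b \<mu> \<in> pseries n" for \<mu>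
    unfolding qcenter_def by blast
  then show ?thesis
    using pos_diag_if_nonneg_span[OF _ assms(1)] b_nonneg_if_zseries_pseries
      unit_multiple_in_nonneg_span_pseries[OF _ _ assms(2)] onto by blast
qed

end

section \<open>Diagonal bases\<close>

locale qbasis_diag = qbasis n q b for n and q :: "nat \<Rightarrow> nat \<Rightarrow> 'k::field" and b +
  fixes p :: "nat \<Rightarrow> nat"
  assumes perm: "p permutes {..<n}" and diag: "pos_diag n (\<lambda>i. b (p i))"
begin

definition d :: "nat \<Rightarrow> int" where
  "d j = b (p j) j"

lemma p_less: "a < n \<Longrightarrow> p a < n"
  using permutes_in_image[OF perm] by simp

lemma p_surj: "k < n \<Longrightarrow> \<exists>a<n. p a = k"
  by (metis imageE lessThan_iff permutes_image[OF perm])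

lemma b_off_diag: "a < n \<Longrightarrow> c < n \<Longrightarrow> c \<noteq> a \<Longrightarrow> b (p a) c = 0"
  using diag by (auto simp: pos_diag_def)

lemma d_pos: "j < n \<Longrightarrow> 0 < d j"
  using diag by (simp add: pos_diag_def d_def)

text \<open>b_k = d e_a, so \<sigma>(b_k, e_c) = q_ac^d, which is 1 because b_k \<in> S.\<close>
lemma untwisted_b:
  assumes k: "k < n" shows "untwisted n q (b k)"
proof -
  obtain a where a: "a < n" "p a = k" using p_surj[OF k] by blast
  have supp: "\<forall>i<n. i \<noteq> a \<longrightarrow> b k i = 0" using b_off_diag a by auto
  have row: "q a c powi b k a = 1" if "c < n" for c
  proof -
    have "qsigma n q (b k) (uvec c 1) = 1" using b_in_qS[OF k] uvec_in_zvec[OF that] by (simp add: qS_def)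
    moreover have "q a c powi b k a = qsigma n q (b k) (uvec c 1)"
      by (rule qsigma_single[OF a(1) that supp, symmetric])
    ultimately show ?thesis by simp
  qed
  have col: "q c a powi b k a = 1" if "c < n" for c
  proof -
    have "q c a = inverse (q a c)" using q_inv that a(1) by blast
    then show ?thesis using row[OF that] by (simp add: power_int_inverse)
  qed
  show ?thesis unfolding untwisted_def
  proof (intro allI impI)
    fix a' c assume "a' < n" "c < n"
    then show "q a' c powi b k a' = 1 \<and> q c a' powi b k a' = 1"
      using row col supp by (cases "a' = a") auto
  qed
qed

lemma untwisted_lin: "untwisted n q (lin m)"
  using untwisted_rowcomb untwisted_b by blast

lemma zseries_lin: "zvec_supported n \<mu> \<Longrightarrow> m \<in> zvec n \<Longrightarrow> zseries n q b \<mu> (lin m) = \<mu> m"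
  using zseries_at_lin zcoeff_eq_1_if_untwisted untwisted_b by simp

lemma lin_component:
  assumes j: "j < n" shows "lin m j = m (p j) * d j"
proof -
  have "lin m j = (\<Sum>a<n. m (p a) * b (p a) j)"
    using sum.permute[OF perm, of "\<lambda>i. m i * b i j"] by (simp add: rowcomb_def comp_def)
  also have "\<dots> = (\<Sum>a<n. if a = j then m (p j) * d j else 0)"
    using b_off_diag j by (intro sum.cong refl) (auto simp: d_def)
  also have "\<dots> = m (p j) * d j" using j by simp
  finally show ?thesis .
qed

lemma lin_lower_bound:
  assumes N: "0 \<le> N" and m: "\<forall>i<n. - N \<le> m i" and j: "j < n"
  shows "- (N * (\<Sum>j<n. d j)) \<le> lin m j"
proof -
  have "d j \<le> (\<Sum>j<n. d j)" using d_pos j by (intro member_le_sum) (auto intro: less_imp_le)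
  then have "- (N * (\<Sum>j<n. d j)) \<le> - N * d j" using N by (simp add: mult_left_mono)
  also have "\<dots> \<le> m (p j) * d j" using m p_less j d_pos[OF j] by (intro mult_right_mono) auto
  finally show ?thesis using lin_component[OF j] by simp
qed

lemma lower_bound_of_lin:
  assumes N: "0 \<le> N" and l: "\<forall>j<n. - N \<le> lin m j" and i: "i < n"
  shows "- N \<le> m i"
proof (cases "0 \<le> m i")
  case False
  obtain a where a: "a < n" "p a = i" using p_surj[OF i] by blast
  then have "- N \<le> m i * d a" using l lin_component by auto
  also have "\<dots> \<le> m i * 1" using False d_pos[OF a(1)] by (intro mult_left_mono_neg) auto
  finally show ?thesis by simp
qed (use N in simp)

lemma zseries_in_laurent:
  assumes \<mu>: "\<mu> \<in> laurent n" shows "zseries n q b \<mu> \<in> laurent n"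
proof -
  note supp = laurent_zvec_supported[OF \<mu>]
  obtain N where N: "0 \<le> N" "\<And>s i. \<mu> s \<noteq> 0 \<Longrightarrow> i < n \<Longrightarrow> - N \<le> s i"
    using laurent_bounded_below[OF \<mu>] by blast
  show ?thesis unfolding laurent_def
  proof (intro CollectI conjI allI impI exI)
    fix u assume "zseries n q b \<mu> u \<noteq> 0"
    then show "u \<in> zvec n" using zseries_nonzero_imp[OF supp] lin_in_zvec by auto
  next
    fix u i assume u: "zseries n q b \<mu> u \<noteq> 0" and i: "i < n"
    obtain m where "u = lin m" "\<mu> m \<noteq> 0" using zseries_nonzero_imp[OF supp u] by blast
    then show "- (N * (\<Sum>j<n. d j)) \<le> u i" using lin_lower_bound[OF N(1) _ i] N(2) by auto
  qed
qed

lemma zseries_in_pseries: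
  assumes \<mu>: "\<mu> \<in> pseries n" shows "zseries n q b \<mu> \<in> pseries n"
proof -
  have L: "\<mu> \<in> laurent n" using \<mu> by (simp add: pseries_def)
  have "0 \<le> u i" if u: "zseries n q b \<mu> u \<noteq> 0" and i: "i < n" for u i
  proof -
    obtain m where "u = lin m" "\<mu> m \<noteq> 0"
      using zseries_nonzero_imp[OF laurent_zvec_supported[OF L] u] by blast
    then show ?thesis using lin_lower_bound[of 0 m i] i \<mu> by (auto simp: pseries_def)
  qed
  then show ?thesis using zseries_in_laurent[OF L] by (simp add: pseries_def)
qed

lemma zseries_in_qcenter:
  assumes "zvec_supported n \<mu>" and "zseries n q b \<mu> \<in> A"
  shows "zseries n q b \<mu> \<in> qcenter n q A"
proof -
  have "\<forall>s. zseries n q b \<mu> s \<noteq> 0 \<longrightarrow> untwisted n q s"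
    using zseries_nonzero_imp[OF assms(1)] untwisted_lin by blast
  then show ?thesis using assms(2) qmult_commute_untwisted by (auto simp: qcenter_def)
qed

definition zcoeffs :: "((nat \<Rightarrow> int) \<Rightarrow> 'k) \<Rightarrow> ((nat \<Rightarrow> int) \<Rightarrow> 'k)" where
  "zcoeffs f = (\<lambda>m. if m \<in> zvec n then f (lin m) else 0)"

lemma zcoeffs_zvec_supported: "zvec_supported n (zcoeffs f)"
  by (simp add: zcoeffs_def)

lemma zseries_zcoeffs:
  assumes A: "A \<subseteq> laurent n" and monoms: "\<And>t. t \<in> zvec n \<Longrightarrow> \<forall>i. 0 \<le> t i \<Longrightarrow> mono t \<in> A"
    and f: "f \<in> qcenter n q A"
  shows "zseries n q b (zcoeffs f) = f"
proof
  fix u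
  show "zseries n q b (zcoeffs f) u = f u"
  proof (cases "\<exists>m\<in>zvec n. lin m = u")
    case True
    then show ?thesis using zseries_lin[OF zcoeffs_zvec_supported] by (auto simp: zcoeffs_def)
  next
    case False
    then have "f u = 0" using qcenter_support_in_qS[OF A monoms f] qS_subset_lin_image by blast
    then show ?thesis using zseries_outside_lin[OF zcoeffs_zvec_supported] False by simp
  qed
qed

lemma zcoeffs_in_laurent:
  assumes f: "f \<in> laurent n" shows "zcoeffs f \<in> laurent n"
proof -
  obtain N where N: "0 \<le> N" "\<And>s i. f s \<noteq> 0 \<Longrightarrow> i < n \<Longrightarrow> - N \<le> s i"
    using laurent_bounded_below[OF f] by blast
  have "- N \<le> m i" if "zcoeffs f m \<noteq> 0" "i < n" for m i
    using that N lower_bound_of_lin[OF N(1)] by (auto simp: zcoeffs_def split: if_splits)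
  then show ?thesis using zcoeffs_zvec_supported by (auto simp: laurent_def)
qed

lemma zcoeffs_in_pseries:
  assumes f: "f \<in> pseries n" shows "zcoeffs f \<in> pseries n"
proof -
  have "0 \<le> m i" if "zcoeffs f m \<noteq> 0" "i < n" for m i
    using that f lower_bound_of_lin[of 0 m i] by (auto simp: zcoeffs_def pseries_def split: if_splits)
  then show ?thesis using zcoeffs_in_laurent f by (auto simp: pseries_def)
qed

lemma inj_on_zseries: "inj_on (zseries n q b) (laurent n)"
proof (rule inj_onI)
  fix \<mu> \<nu> assume "\<mu> \<in> laurent n" "\<nu> \<in> laurent n" and eq: "zseries n q b \<mu> = zseries n q b \<nu>"
  then have supp: "zvec_supported n \<mu>" "zvec_supported n \<nu>" by (simp_all add: laurent_zvec_supported)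
  show "\<mu> = \<nu>"
  proof
    fix m show "\<mu> m = \<nu> m"
      using zseries_lin[OF supp(1), of m] zseries_lin[OF supp(2), of m] eq supp
      by (cases "m \<in> zvec n") force+
  qed
qed

lemma zseries_add:
  assumes \<mu>: "zvec_supported n \<mu>" and \<nu>: "zvec_supported n \<nu>"
  shows "zseries n q b (\<lambda>s. \<mu> s + \<nu> s) = (\<lambda>u. zseries n q b \<mu> u + zseries n q b \<nu> u)"
proof
  have sum: "zvec_supported n (\<lambda>s. \<mu> s + \<nu> s)" using \<mu> \<nu> by force
  fix u
  show "zseries n q b (\<lambda>s. \<mu> s + \<nu> s) u = zseries n q b \<mu> u + zseries n q b \<nu> u"
  proof (cases "\<exists>m\<in>zvec n. lin m = u")
    case True
    then show ?thesis using zseries_lin[OF \<mu>] zseries_lin[OF \<nu>] zseries_lin[OF sum] by auto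
  next
    case False
    then show ?thesis
      using zseries_outside_lin[OF \<mu>] zseries_outside_lin[OF \<nu>] zseries_outside_lin[OF sum] by simp
  qed
qed

lemma zseries_convolution_support:
  assumes \<mu>: "zvec_supported n \<mu>" and \<nu>: "zvec_supported n \<nu>" and m: "m \<in> zvec n"
  shows "{s. zseries n q b \<mu> s \<noteq> 0 \<and> zseries n q b \<nu> (lin m - s) \<noteq> 0}
    = lin ` {a. \<mu> a \<noteq> 0 \<and> \<nu> (m - a) \<noteq> 0}"
proof (intro equalityI subsetI)
  fix s assume s: "s \<in> {s. zseries n q b \<mu> s \<noteq> 0 \<and> zseries n q b \<nu> (lin m - s) \<noteq> 0}"
  then obtain a where a: "a \<in> zvec n" "s = lin a" "\<mu> a \<noteq> 0" using zseries_nonzero_imp[OF \<mu>] by blast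
  obtain c where c: "c \<in> zvec n" "lin m - s = lin c" "\<nu> c \<noteq> 0" using zseries_nonzero_imp[OF \<nu>] s by blast
  have "lin c = lin (m - a)" using c(2) a(2) by (simp add: rowcomb_diff)
  then have "c = m - a" using inj_on_lin c(1) zvec_diff[OF m a(1)] by (auto dest: inj_onD)
  then show "s \<in> lin ` {a. \<mu> a \<noteq> 0 \<and> \<nu> (m - a) \<noteq> 0}" using a c by auto
next
  fix s assume "s \<in> lin ` {a. \<mu> a \<noteq> 0 \<and> \<nu> (m - a) \<noteq> 0}"
  then obtain a where "\<mu> a \<noteq> 0" "\<nu> (m - a) \<noteq> 0" "s = lin a" by blast
  moreover have "a \<in> zvec n" "m - a \<in> zvec n" using calculation \<mu> \<nu> by auto
  ultimately show "s \<in> {s. zseries n q b \<mu> s \<noteq> 0 \<and> zseries n q b \<nu> (lin m - s) \<noteq> 0}"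
    using zseries_lin[OF \<mu>] zseries_lin[OF \<nu>] by (simp add: rowcomb_diff[symmetric])
qed

lemma zseries_convolution_support_empty:
  assumes \<mu>: "zvec_supported n \<mu>" and \<nu>: "zvec_supported n \<nu>" and u: "\<forall>m\<in>zvec n. lin m \<noteq> u"
  shows "{s. zseries n q b \<mu> s \<noteq> 0 \<and> zseries n q b \<nu> (u - s) \<noteq> 0} = {}"
proof (rule ccontr)
  assume "{s. zseries n q b \<mu> s \<noteq> 0 \<and> zseries n q b \<nu> (u - s) \<noteq> 0} \<noteq> {}"
  then obtain s where s: "zseries n q b \<mu> s \<noteq> 0" "zseries n q b \<nu> (u - s) \<noteq> 0" by blast
  obtain a where a: "a \<in> zvec n" "s = lin a" using zseries_nonzero_imp[OF \<mu> s(1)] by blast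
  obtain c where c: "c \<in> zvec n" "u - s = lin c" using zseries_nonzero_imp[OF \<nu> s(2)] by blast
  have "u = lin (a + c)" using a c by (simp add: rowcomb_add algebra_simps)
  then show False using u zvec_add[OF a(1) c(1)] by blast
qed

text \<open>On the exponents lin m the reordering scalars are trivial, so qmult of two series
  in the z's is the convolution of their coefficients transported along lin.\<close>
lemma zseries_cmult:
  assumes \<mu>: "zvec_supported n \<mu>" and \<nu>: "zvec_supported n \<nu>"
  shows "zseries n q b (cmult n \<mu> \<nu>) = qmult n q (zseries n q b \<mu>) (zseries n q b \<nu>)"
proof
  note prod_supp = cmult_zvec_supported[OF \<mu> \<nu>]
  let ?zm = "zseries n q b \<mu>" and ?zn = "zseries n q b \<nu>"
  fix u
  show "zseries n q b (cmult n \<mu> \<nu>) u = qmult n q ?zm ?zn u"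
  proof (cases "\<exists>m\<in>zvec n. lin m = u")
    case True
    then obtain m where m: "m \<in> zvec n" "u = lin m" by blast
    let ?Y = "{a. \<mu> a \<noteq> 0 \<and> \<nu> (m - a) \<noteq> 0}"
    have Y: "a \<in> zvec n" "m - a \<in> zvec n" if "a \<in> ?Y" for a
      using that \<mu> \<nu> by auto
    have "inj_on lin ?Y" using inj_on_lin by (rule inj_on_subset) (use Y in blast)
    then have "qmult n q ?zm ?zn u
        = (\<Sum>a\<in>?Y. ?zm (lin a) * ?zn (lin m - lin a) * qeps n q (lin a) (lin m - lin a))"
      by (simp add: qmult_def m(2) zseries_convolution_support[OF \<mu> \<nu> m(1)] sum.reindex)
    also have "\<dots> = (\<Sum>a\<in>?Y. \<mu> a * \<nu> (m - a))"
      using Y zseries_lin[OF \<mu>] zseries_lin[OF \<nu>] untwisted_qeps_left[OF untwisted_lin]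
      by (intro sum.cong refl) (simp add: rowcomb_diff[symmetric])
    also have "\<dots> = zseries n q b (cmult n \<mu> \<nu>) u"
      using zseries_lin[OF prod_supp m(1)] m(2) by (simp add: cmult_def qmult_def qeps_one)
    finally show ?thesis by simp
  next
    case False
    then have empty: "{s. ?zm s \<noteq> 0 \<and> ?zn (u - s) \<noteq> 0} = {}"
      using zseries_convolution_support_empty[OF \<mu> \<nu>] by blast
    have "qmult n q ?zm ?zn u = 0" unfolding qmult_def empty by simp
    then show ?thesis using zseries_outside_lin[OF prod_supp] False by simp
  qed
qed

lemma bij_betw_zseries_qcenter:
  assumes A: "A \<subseteq> laurent n" and monoms: "\<And>t. t \<in> zvec n \<Longrightarrow> \<forall>i. 0 \<le> t i \<Longrightarrow> mono t \<in> A"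
    and zseries_closed: "\<And>\<mu>. \<mu> \<in> A \<Longrightarrow> zseries n q b \<mu> \<in> A"
    and zcoeffs_closed: "\<And>f. f \<in> A \<Longrightarrow> zcoeffs f \<in> A"
  shows "bij_betw (zseries n q b) A (qcenter n q A)"
  unfolding bij_betw_def
proof (intro conjI equalityI subsetI)
  show "inj_on (zseries n q b) A" using inj_on_zseries A by (rule inj_on_subset)
next
  fix f assume "f \<in> zseries n q b ` A"
  then show "f \<in> qcenter n q A"
    using A zseries_closed zseries_in_qcenter laurent_zvec_supported by blast
next
  fix f assume f: "f \<in> qcenter n q A"
  then have "zcoeffs f \<in> A" using zcoeffs_closed by (simp add: qcenter_def)
  moreover have "zseries n q b (zcoeffs f) = f" using zseries_zcoeffs[OF A monoms f] .
  ultimately show "f \<in> zseries n q b ` A" by (metis image_eqI)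
qed

lemma zseries_center_iso_laurent: "zseries_center_iso n q b (laurent n)"
  unfolding zseries_center_iso_def
  using bij_betw_zseries_qcenter[OF subset_refl _ zseries_in_laurent zcoeffs_in_laurent]
    mono_in_pseries pseries_subset_laurent zseries_add zseries_cmult laurent_zvec_supported
  by blast

lemma zseries_center_iso_pseries: "zseries_center_iso n q b (pseries n)"
  unfolding zseries_center_iso_def
  using bij_betw_zseries_qcenter[OF pseries_subset_laurent mono_in_pseries zseries_in_pseries zcoeffs_in_pseries]
    pseries_subset_laurent zseries_add zseries_cmult laurent_zvec_supported
  by blast

end

lemma common_root_exponent:
  fixes f :: "'a \<Rightarrow> 'b::monoid_mult"
  assumes "finite I" and "\<forall>i\<in>I. \<exists>d>0. f i ^ d = 1"
  obtains D where "0 < D" "\<And>i. i \<in> I \<Longrightarrow> f i ^ D = 1"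
proof -
  obtain d where d: "\<forall>i\<in>I. 0 < d i \<and> f i ^ d i = 1"
    using bchoice[OF assms(2)] by blast
  show thesis
  proof (rule that[of "prod d I"])
    show "0 < prod d I" using d by (simp add: prod_pos)
    fix i assume "i \<in> I"
    with assms(1) have "d i dvd prod d I" by (rule dvd_prodI)
    then obtain k where "prod d I = d i * k" by (rule dvdE)
    then show "f i ^ prod d I = 1" using d \<open>i \<in> I\<close> by (simp add: power_mult)
  qed
qed

theorem theorem3p4:
  fixes n :: nat and q :: "nat \<Rightarrow> nat \<Rightarrow> 'k::alg_closed_field"
    and b :: "nat \<Rightarrow> nat \<Rightarrow> int"
  assumes n_pos: "0 < n"
    and q_nz: "\<forall>i<n. \<forall>j<n. q i j \<noteq> 0"
    and q_diag: "\<forall>i<n. q i i = 1"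
    and q_inv: "\<forall>i<n. \<forall>j<n. q i j = inverse (q j i)"
    and q_roots: "\<forall>i<n. \<forall>j<n. \<exists>d::nat. 0 < d \<and> q i j ^ d = 1"
    and basis: "is_Zbasis n q b"
  shows "((\<exists>\<pi>. \<pi> permutes {..<n} \<and> pos_diag n (\<lambda>i. b (\<pi> i)))
           \<longleftrightarrow> (bij_betw (zseries n q b) (laurent n) (qcenter n q (laurent n))
                \<and> (\<forall>\<mu>\<in>laurent n. \<forall>\<nu>\<in>laurent n.
                     zseries n q b (\<lambda>s. \<mu> s + \<nu> s) = (\<lambda>u. zseries n q b \<mu> u + zseries n q b \<nu> u)
                   \<and> zseries n q b (cmult n \<mu> \<nu>) = qmult n q (zseries n q b \<mu>) (zseries n q b \<nu>))))
       \<and> ((\<exists>\<pi>. \<pi> permutes {..<n} \<and> pos_diag n (\<lambda>i. b (\<pi> i)))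
           \<longleftrightarrow> (bij_betw (zseries n q b) (pseries n) (qcenter n q (pseries n))
                \<and> (\<forall>\<mu>\<in>pseries n. \<forall>\<nu>\<in>pseries n.
                     zseries n q b (\<lambda>s. \<mu> s + \<nu> s) = (\<lambda>u. zseries n q b \<mu> u + zseries n q b \<nu> u)
                   \<and> zseries n q b (cmult n \<mu> \<nu>) = qmult n q (zseries n q b \<mu>) (zseries n q b \<nu>))))"
proof -
  interpret qbasis n q b using q_nz q_diag q_inv basis by unfold_locales
  obtain D where "0 < D" and D: "\<And>ij. ij \<in> {..<n} \<times> {..<n} \<Longrightarrow> case_prod q ij ^ D = 1"
    by (rule common_root_exponent[of "{..<n} \<times> {..<n}" "case_prod q"]) (use q_roots in auto)
  then have roots: "\<forall>i<n. \<forall>j<n. q i j ^ D = 1" by auto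
  have iso: "zseries_center_iso n q b (laurent n) \<and> zseries_center_iso n q b (pseries n)"
    if "\<exists>\<pi>. \<pi> permutes {..<n} \<and> pos_diag n (\<lambda>i. b (\<pi> i))"
  proof -
    from that obtain \<pi> where "\<pi> permutes {..<n}" "pos_diag n (\<lambda>i. b (\<pi> i))" by blast
    then interpret qbasis_diag n q b \<pi> by unfold_locales
    show ?thesis using zseries_center_iso_laurent zseries_center_iso_pseries by blast
  qed
  show ?thesis
    unfolding zseries_center_iso_def[symmetric]
    using iso pos_diag_if_zseries_center_iso_laurent[OF \<open>0 < D\<close> roots]
      pos_diag_if_zseries_center_iso_pseries[OF \<open>0 < D\<close> roots] by blast
qed

end
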